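(* Let $Q$ be a finite acyclic quiver with an admissible ordering $v_1,\dots,v_k$ of its vertices. Then there are isomorphisms of quivers ${}_\infty Q\cong\mathbb{N}Q$, ${}_{-\infty}Q\cong-\mathbb{N}Q$ and ${}_\infty\underline{Q}\cong\mathbb{Z}Q$ (identifying the vertex $\tau^{-n}v$ with $(n,v)$).
   Context: The repetitive quiver $\mathbb{Z}Q$ has vertices $\mathbb{Z}\times Q_0$ and, for each arrow $\alpha:v\to w$ of $Q$ and $n\in\mathbb{Z}$, arrows $(n,v)\to(n,w)$ and $(n,w)\to(n+1,v)$; $\mathbb{N}Q$ and $-\mathbb{N}Q$ denote its full subquivers on the vertices $(n,v)$ with $n\ge0$, resp. $n\le0$. An ordering $v_1,\dots,v_k$ of $Q_0$ is admissible if each $v_i$ is a source of the quiver obtained from $Q$ by reversing all arrows at $v_1$, then at $v_2$, ..., then at $v_{i-1}$. For a quiver $\Gamma$ and vertex $u$: $\Gamma^+(u)$ adds a new vertex $\tau^{-1}u$ and one arrow $w\to\tau^{-1}u$ for each arrow $u\to w$ of $\Gamma$; $\Gamma^-(u)$ adds a new vertex $\tau u$ and one arrow $\tau u\to w$ for each arrow $w\to u$; $\Gamma^\pm(u_1,\dots,u_m)$ means applying these successively. Define ${}_0Q={}_0\underline{Q}=Q$, ${}_nQ={}_{n-1}Q^+(\tau^{-n+1}v_1,\dots,\tau^{-n+1}v_k)$, ${}_{-n}Q={}_{-n+1}Q^-(\tau^{n-1}v_k,\dots,\tau^{n-1}v_1)$, ${}_n\underline{Q}={}_{n-1}\underline{Q}^+(\tau^{-n+1}v_1,\dots,\tau^{-n+1}v_k)^-(\tau^{n-1}v_k,\dots,\tau^{n-1}v_1)$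 (with $\tau^{-j}$, $\tau^{j}$ of a new vertex meaning the iterated new vertices), and ${}_\infty Q=\bigcup_n{}_nQ$, ${}_{-\infty}Q=\bigcup_n{}_{-n}Q$, ${}_\infty\underline{Q}=\bigcup_n{}_n\underline{Q}$. *)

theory Defs
  imports Main
begin

text \<open>A (multi)quiver is a vertex set together with arrow multiplicities:
  snd G x y is the number of arrows x to y (zero unless x, y are vertices).\<close>
type_synonym 'a quiver = "'a set \<times> ('a \<Rightarrow> 'a \<Rightarrow> nat)"

definition arrow_rel :: "('v \<Rightarrow> 'v \<Rightarrow> nat) \<Rightarrow> ('v \<times> 'v) set" where
  "arrow_rel a = {(x, y). a x y > 0}"

definition finite_quiver :: "'v set \<Rightarrow> ('v \<Rightarrow> 'v \<Rightarrow> nat) \<Rightarrow> bool" where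
  "finite_quiver Q0 a \<longleftrightarrow> finite Q0 \<and> (\<forall>x y. a x y > 0 \<longrightarrow> x \<in> Q0 \<and> y \<in> Q0)"

definition acyclic_quiver :: "('v \<Rightarrow> 'v \<Rightarrow> nat) \<Rightarrow> bool" where
  "acyclic_quiver a \<longleftrightarrow> (\<forall>x. (x, x) \<notin> (arrow_rel a)\<^sup>+)"

definition reverse_at :: "('v \<Rightarrow> 'v \<Rightarrow> nat) \<Rightarrow> 'v \<Rightarrow> ('v \<Rightarrow> 'v \<Rightarrow> nat)" where
  "reverse_at a v = (\<lambda>x y. if (x = v) \<noteq> (y = v) then a y x else a x y)"

definition is_source :: "('v \<Rightarrow> 'v \<Rightarrow> nat) \<Rightarrow> 'v \<Rightarrow> bool" where
  "is_source a v \<longleftrightarrow> (\<forall>w. a w v = 0)"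

definition admissible_ordering :: "'v set \<Rightarrow> ('v \<Rightarrow> 'v \<Rightarrow> nat) \<Rightarrow> 'v list \<Rightarrow> bool" where
  "admissible_ordering Q0 a vs \<longleftrightarrow> distinct vs \<and> set vs = Q0 \<and>
     (\<forall>i < length vs. is_source (foldl reverse_at a (take i vs)) (vs ! i))"

text \<open>Vertices of the constructed quivers are labelled by int \<times> 'v: the vertex
  tau^(-n) v is labelled (n, v) (so tau^n v is (-n, v)); Q itself sits at level 0.\<close>
definition tau_inv :: "int \<times> 'v \<Rightarrow> int \<times> 'v" where
  "tau_inv u = (fst u + 1, snd u)"

definition tau :: "int \<times> 'v \<Rightarrow> int \<times> 'v" where
  "tau u = (fst u - 1, snd u)"

text \<open>Gamma^+(u): new vertex tau^-1 u, one arrow w \<rightarrow> tau^-1 u per arrow u \<rightarrow> w.\<close>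
definition qplus :: "(int \<times> 'v) quiver \<Rightarrow> int \<times> 'v \<Rightarrow> (int \<times> 'v) quiver" where
  "qplus G u = (insert (tau_inv u) (fst G),
     (\<lambda>x y. snd G x y + (if y = tau_inv u then snd G u x else 0)))"

text \<open>Gamma^-(u): new vertex tau u, one arrow tau u \<rightarrow> w per arrow w \<rightarrow> u.\<close>
definition qminus :: "(int \<times> 'v) quiver \<Rightarrow> int \<times> 'v \<Rightarrow> (int \<times> 'v) quiver" where
  "qminus G u = (insert (tau u) (fst G),
     (\<lambda>x y. snd G x y + (if x = tau u then snd G y u else 0)))"

definition base_quiver :: "'v set \<Rightarrow> ('v \<Rightarrow> 'v \<Rightarrow> nat) \<Rightarrow> (int \<times> 'v) quiver" where
  "base_quiver Q0 a = ({0} \<times> Q0,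
     (\<lambda>x y. if fst x = 0 \<and> fst y = 0 then a (snd x) (snd y) else 0))"

text \<open>One step: Gamma^+(tau^{-n} v_1, ..., tau^{-n} v_k), resp.
  Gamma^-(tau^n v_k, ..., tau^n v_1).\<close>
definition plus_step :: "'v list \<Rightarrow> nat \<Rightarrow> (int \<times> 'v) quiver \<Rightarrow> (int \<times> 'v) quiver" where
  "plus_step vs n G = foldl (\<lambda>H v. qplus H (int n, v)) G vs"

definition minus_step :: "'v list \<Rightarrow> nat \<Rightarrow> (int \<times> 'v) quiver \<Rightarrow> (int \<times> 'v) quiver" where
  "minus_step vs n G = foldl (\<lambda>H v. qminus H (- int n, v)) G (rev vs)"

fun Qpos :: "'v set \<Rightarrow> ('v \<Rightarrow> 'v \<Rightarrow> nat) \<Rightarrow> 'v list \<Rightarrow> nat \<Rightarrow> (int \<times> 'v) quiver" where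
  "Qpos Q0 a vs 0 = base_quiver Q0 a"
| "Qpos Q0 a vs (Suc n) = plus_step vs n (Qpos Q0 a vs n)"

fun Qneg :: "'v set \<Rightarrow> ('v \<Rightarrow> 'v \<Rightarrow> nat) \<Rightarrow> 'v list \<Rightarrow> nat \<Rightarrow> (int \<times> 'v) quiver" where
  "Qneg Q0 a vs 0 = base_quiver Q0 a"
| "Qneg Q0 a vs (Suc n) = minus_step vs n (Qneg Q0 a vs n)"

fun Qund :: "'v set \<Rightarrow> ('v \<Rightarrow> 'v \<Rightarrow> nat) \<Rightarrow> 'v list \<Rightarrow> nat \<Rightarrow> (int \<times> 'v) quiver" where
  "Qund Q0 a vs 0 = base_quiver Q0 a"
| "Qund Q0 a vs (Suc n) = minus_step vs n (plus_step vs n (Qund Q0 a vs n))"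

text \<open>Union of an ascending chain of quivers: union of vertices, and the arrows
  between two vertices are the union of the (nested) arrow sets, i.e. the supremum
  of the multiplicities.\<close>
definition quiver_Union :: "(nat \<Rightarrow> 'a quiver) \<Rightarrow> 'a quiver" where
  "quiver_Union Gs = ((\<Union>n. fst (Gs n)), (\<lambda>x y. SUP n. snd (Gs n) x y))"

definition ZQ_arrows :: "('v \<Rightarrow> 'v \<Rightarrow> nat) \<Rightarrow> int \<times> 'v \<Rightarrow> int \<times> 'v \<Rightarrow> nat" where
  "ZQ_arrows a x y = (if fst y = fst x then a (snd x) (snd y) else 0)
                   + (if fst y = fst x + 1 then a (snd y) (snd x) else 0)"

definition full_subquiver :: "'a quiver \<Rightarrow> 'a set \<Rightarrow> 'a quiver" where
  "full_subquiver G S = (fst G \<inter> S, (\<lambda>x y. if x \<in> S \<and> y \<in> S then snd G x y else 0))"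

definition ZQ :: "'v set \<Rightarrow> ('v \<Rightarrow> 'v \<Rightarrow> nat) \<Rightarrow> (int \<times> 'v) quiver" where
  "ZQ Q0 a = (UNIV \<times> Q0, ZQ_arrows a)"

definition NQ :: "'v set \<Rightarrow> ('v \<Rightarrow> 'v \<Rightarrow> nat) \<Rightarrow> (int \<times> 'v) quiver" where
  "NQ Q0 a = full_subquiver (ZQ Q0 a) {x. fst x \<ge> 0}"

definition negNQ :: "'v set \<Rightarrow> ('v \<Rightarrow> 'v \<Rightarrow> nat) \<Rightarrow> (int \<times> 'v) quiver" where
  "negNQ Q0 a = full_subquiver (ZQ Q0 a) {x. fst x \<le> 0}"

end

theory Submission
  imports Defs
begin

text \<open>Every finite stage of the three constructions is the full subquiver of \<open>\<int>Q\<close> on a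
  block of consecutive levels \<open>{m..n} \<times> Q\<^sub>0\<close>. In \<open>\<int>Q\<close> the arrows \<open>u \<rightarrow> w\<close> correspond
  bijectively to the arrows \<open>w \<rightarrow> \<tau>\<^sup>-\<^sup>1 u\<close>, so \<open>\<Gamma>\<^sup>+(u)\<close> adds exactly the arrows of \<open>\<int>Q\<close> from
  the current vertices into \<open>\<tau>\<^sup>-\<^sup>1 u\<close>. No arrow out of \<open>\<tau>\<^sup>-\<^sup>1 v\<^sub>i\<close> is missing: its only
  possible targets already present are the \<open>\<tau>\<^sup>-\<^sup>1 v\<^sub>j\<close> with \<open>j \<le> i\<close>, and an arrow \<open>v\<^sub>i \<rightarrow> v\<^sub>j\<close>
  would go from a later to an earlier vertex, which an admissible ordering forbids. Dually
  for \<open>\<Gamma>\<^sup>-\<close>. The unions of the increasing level blocks are \<open>\<nat>Q\<close>, \<open>-\<nat>Q\<close> and \<open>\<int>Q\<close>.\<close>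

definition ZQ_full :: "('v \<Rightarrow> 'v \<Rightarrow> nat) \<Rightarrow> (int \<times> 'v) set \<Rightarrow> (int \<times> 'v) quiver" where
  "ZQ_full a S = full_subquiver (UNIV, ZQ_arrows a) S"

lemma ZQ_full_eq:
  "ZQ_full a S = (S, \<lambda>x y. if x \<in> S \<and> y \<in> S then ZQ_arrows a x y else 0)"
  unfolding ZQ_full_def full_subquiver_def by (simp cong: if_cong)

lemma quiver_Union_ZQ_full:
  assumes "mono L"
  shows "quiver_Union (\<lambda>k. ZQ_full a (L k)) = ZQ_full a (\<Union>k. L k)"
proof -
  have "(SUP k. snd (ZQ_full a (L k)) x y) = snd (ZQ_full a (\<Union>k. L k)) x y" for x y
  proof (cases "x \<in> (\<Union>k. L k) \<and> y \<in> (\<Union>k. L k)")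
    case True
    then obtain i j where "x \<in> L i" "y \<in> L j" by blast
    with \<open>mono L\<close> have "x \<in> L (max i j)" "y \<in> L (max i j)"
      by (meson max.cobounded1 max.cobounded2 monoD subsetD)+
    with True show ?thesis
      by (intro cSup_eq_maximum) (auto simp: ZQ_full_eq intro!: image_eqI[of _ _ "max i j"])
  next
    case False
    then show ?thesis by (auto simp: ZQ_full_eq)
  qed
  then show ?thesis
    by (simp add: quiver_Union_def ZQ_full_eq fun_eq_iff)
qed

lemma ZQ_arrows_outside:
  assumes "finite_quiver Q0 a" "snd x \<notin> Q0 \<or> snd y \<notin> Q0"
  shows "ZQ_arrows a x y = 0"
  using assms by (auto simp: finite_quiver_def ZQ_arrows_def)

lemma ZQ_eq_ZQ_full:
  assumes "finite_quiver Q0 a"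
  shows "ZQ Q0 a = ZQ_full a (UNIV \<times> Q0)"
  using ZQ_arrows_outside[OF assms] by (auto simp: ZQ_def ZQ_full_eq fun_eq_iff)

lemma NQ_eq_ZQ_full:
  assumes "finite_quiver Q0 a"
  shows "NQ Q0 a = ZQ_full a ({0..} \<times> Q0)"
  using ZQ_arrows_outside[OF assms]
  by (auto simp: NQ_def ZQ_def full_subquiver_def ZQ_full_eq fun_eq_iff)

lemma negNQ_eq_ZQ_full:
  assumes "finite_quiver Q0 a"
  shows "negNQ Q0 a = ZQ_full a ({..0} \<times> Q0)"
  using ZQ_arrows_outside[OF assms]
  by (auto simp: negNQ_def ZQ_def full_subquiver_def ZQ_full_eq fun_eq_iff)

lemma base_quiver_eq_ZQ_full:
  assumes "finite_quiver Q0 a"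
  shows "base_quiver Q0 a = ZQ_full a ({0} \<times> Q0)"
  using assms by (auto simp: base_quiver_def ZQ_full_eq ZQ_arrows_def finite_quiver_def fun_eq_iff)

lemma foldl_reverse_at_other:
  "x \<notin> set ws \<Longrightarrow> y \<notin> set ws \<Longrightarrow> foldl reverse_at a ws x y = a x y"
  by (induction ws arbitrary: a) (auto simp: reverse_at_def)

lemma admissible_ordering_arrow_into:
  assumes adm: "admissible_ordering Q0 a vs" and vs: "vs = ps @ w # ws" and "v \<notin> set ps"
  shows "a v w = 0"
proof -
  have "\<forall>i < length vs. is_source (foldl reverse_at a (take i vs)) (vs ! i)"
    using adm by (simp add: admissible_ordering_def)
  moreover have "length ps < length vs" "take (length ps) vs = ps" "vs ! length ps = w"
    using vs by simp_all
  ultimately have "is_source (foldl reverse_at a ps) w"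
    by metis
  then have "foldl reverse_at a ps v w = 0"
    by (simp add: is_source_def)
  moreover have "w \<notin> set ps"
    using adm vs by (simp add: admissible_ordering_def)
  ultimately show ?thesis
    using \<open>v \<notin> set ps\<close> foldl_reverse_at_other by metis
qed

lemma admissible_ordering_arrow_from:
  assumes adm: "admissible_ordering Q0 a vs" and vs: "vs = ps @ w # ws"
    and p: "p \<in> insert w (set ps)"
  shows "a w p = 0"
proof (cases "p = w")
  case True
  have "w \<notin> set ps" using adm vs by (simp add: admissible_ordering_def)
  with True show ?thesis using admissible_ordering_arrow_into[OF adm vs] by simp
next
  case False
  with p obtain ps1 ps2 where "ps = ps1 @ p # ps2" by (auto dest: split_list)
  moreover from this have "w \<notin> set ps1" using adm vs by (auto simp: admissible_ordering_def)
  ultimately show ?thesis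
    using admissible_ordering_arrow_into[OF adm, of ps1 p "ps2 @ w # ws" w] vs by simp
qed

lemma qplus_ZQ_full:
  assumes "tau_inv u \<notin> S" "u \<in> S"
    and "\<forall>y \<in> insert (tau_inv u) S. ZQ_arrows a (tau_inv u) y = 0"
  shows "qplus (ZQ_full a S) u = ZQ_full a (insert (tau_inv u) S)"
proof -
  have mesh: "ZQ_arrows a u x = ZQ_arrows a x (tau_inv u)" for x
    by (auto simp: ZQ_arrows_def tau_inv_def)
  show ?thesis
    using assms by (auto simp: qplus_def ZQ_full_eq fun_eq_iff mesh)
qed

lemma qminus_ZQ_full:
  assumes "tau u \<notin> S" "u \<in> S"
    and "\<forall>y \<in> insert (tau u) S. ZQ_arrows a y (tau u) = 0"
  shows "qminus (ZQ_full a S) u = ZQ_full a (insert (tau u) S)"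
proof -
  have mesh: "ZQ_arrows a x u = ZQ_arrows a (tau u) x" for x
    by (auto simp: ZQ_arrows_def tau_def)
  show ?thesis
    using assms by (auto simp: qminus_def ZQ_full_eq fun_eq_iff mesh)
qed

lemma foldl_ZQ_full_insert:
  assumes step: "\<And>ps w ws. us = ps @ w # ws \<Longrightarrow>
      f (ZQ_full a (B \<union> g ` set ps)) w = ZQ_full a (insert (g w) (B \<union> g ` set ps))"
  shows "foldl f (ZQ_full a B) us = ZQ_full a (B \<union> g ` set us)"
proof -
  have "foldl f (ZQ_full a (B \<union> g ` set ps)) ws = ZQ_full a (B \<union> g ` set us)"
    if "us = ps @ ws" for ps ws
    using that
  proof (induction ws arbitrary: ps)
    case Nil
    then show ?case by simp
  next
    case (Cons w ws)
    have "f (ZQ_full a (B \<union> g ` set ps)) w = ZQ_full a (B \<union> g ` set (ps @ [w]))"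
      using step[OF Cons.prems] by simp
    with Cons.IH[of "ps @ [w]"] Cons.prems show ?case by simp
  qed
  from this[of "[]" us] show ?thesis by simp
qed

lemma plus_step_ZQ_full:
  assumes adm: "admissible_ordering Q0 a vs"
    and below: "B \<subseteq> {..int n} \<times> UNIV" and top: "{int n} \<times> Q0 \<subseteq> B"
  shows "plus_step vs n (ZQ_full a B) = ZQ_full a (B \<union> {int n + 1} \<times> Q0)"
proof -
  have Q0: "set vs = Q0" using adm by (simp add: admissible_ordering_def)
  have "foldl (\<lambda>H v. qplus H (int n, v)) (ZQ_full a B) vs
      = ZQ_full a (B \<union> Pair (int n + 1) ` set vs)"
  proof (rule foldl_ZQ_full_insert)
    fix ps w ws
    assume vs: "vs = ps @ w # ws"
    let ?S = "B \<union> Pair (int n + 1) ` set ps"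
    have "w \<notin> set ps" using adm vs by (simp add: admissible_ordering_def)
    have "qplus (ZQ_full a ?S) (int n, w) = ZQ_full a (insert (tau_inv (int n, w)) ?S)"
    proof (rule qplus_ZQ_full)
      show "tau_inv (int n, w) \<notin> ?S"
        using below \<open>w \<notin> set ps\<close> by (auto simp: tau_inv_def)
      show "(int n, w) \<in> ?S"
        using top vs Q0 by auto
      show "\<forall>y \<in> insert (tau_inv (int n, w)) ?S. ZQ_arrows a (tau_inv (int n, w)) y = 0"
        using below admissible_ordering_arrow_from[OF adm vs]
        by (fastforce simp: tau_inv_def ZQ_arrows_def)
    qed
    then show "qplus (ZQ_full a ?S) (int n, w) = ZQ_full a (insert (int n + 1, w) ?S)"
      by (simp add: tau_inv_def)
  qed
  moreover have "Pair (int n + 1) ` set vs = {int n + 1} \<times> Q0"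
    using Q0 by auto
  ultimately show ?thesis
    by (simp add: plus_step_def)
qed

lemma minus_step_ZQ_full:
  assumes adm: "admissible_ordering Q0 a vs"
    and above: "B \<subseteq> {- int n..} \<times> UNIV" and bottom: "{- int n} \<times> Q0 \<subseteq> B"
  shows "minus_step vs n (ZQ_full a B) = ZQ_full a (B \<union> {- int n - 1} \<times> Q0)"
proof -
  have Q0: "set vs = Q0" using adm by (simp add: admissible_ordering_def)
  have "foldl (\<lambda>H v. qminus H (- int n, v)) (ZQ_full a B) (rev vs)
      = ZQ_full a (B \<union> Pair (- int n - 1) ` set (rev vs))"
  proof (rule foldl_ZQ_full_insert)
    fix ps w ws
    assume "rev vs = ps @ w # ws"
    then have vs: "vs = rev ws @ w # rev ps"
      by (simp add: rev_swap)
    let ?S = "B \<union> Pair (- int n - 1) ` set ps"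
    have "distinct vs" using adm by (simp add: admissible_ordering_def)
    then have "w \<notin> set ps" "set ps \<inter> set ws = {}" using vs by auto
    have "qminus (ZQ_full a ?S) (- int n, w) = ZQ_full a (insert (tau (- int n, w)) ?S)"
    proof (rule qminus_ZQ_full)
      show "tau (- int n, w) \<notin> ?S"
        using above \<open>w \<notin> set ps\<close> by (auto simp: tau_def)
      show "(- int n, w) \<in> ?S"
        using bottom vs Q0 by auto
      have "a p w = 0" if "p \<in> insert w (set ps)" for p
        using admissible_ordering_arrow_into[OF adm vs] that \<open>w \<notin> set ps\<close> vs
          \<open>distinct vs\<close> \<open>set ps \<inter> set ws = {}\<close> by auto
      then show "\<forall>y \<in> insert (tau (- int n, w)) ?S. ZQ_arrows a y (tau (- int n, w)) = 0"
        using above by (fastforce simp: tau_def ZQ_arrows_def)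
    qed
    then show "qminus (ZQ_full a ?S) (- int n, w) = ZQ_full a (insert (- int n - 1, w) ?S)"
      by (simp add: tau_def)
  qed
  moreover have "Pair (- int n - 1) ` set (rev vs) = {- int n - 1} \<times> Q0"
    using Q0 by auto
  ultimately show ?thesis
    by (simp add: minus_step_def)
qed

lemma Qpos_eq_ZQ_full:
  assumes fin: "finite_quiver Q0 a" and adm: "admissible_ordering Q0 a vs"
  shows "Qpos Q0 a vs n = ZQ_full a ({0..int n} \<times> Q0)"
proof (induction n)
  case 0
  then show ?case using base_quiver_eq_ZQ_full[OF fin] by simp
next
  case (Suc n)
  have "plus_step vs n (ZQ_full a ({0..int n} \<times> Q0))
      = ZQ_full a ({0..int n} \<times> Q0 \<union> {int n + 1} \<times> Q0)"
    by (rule plus_step_ZQ_full[OF adm]) auto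
  moreover have "{0..int n} \<times> Q0 \<union> {int n + 1} \<times> Q0 = {0..int (Suc n)} \<times> Q0"
    by auto
  ultimately show ?case
    using Suc by simp
qed

lemma Qneg_eq_ZQ_full:
  assumes fin: "finite_quiver Q0 a" and adm: "admissible_ordering Q0 a vs"
  shows "Qneg Q0 a vs n = ZQ_full a ({- int n..0} \<times> Q0)"
proof (induction n)
  case 0
  then show ?case using base_quiver_eq_ZQ_full[OF fin] by simp
next
  case (Suc n)
  have "minus_step vs n (ZQ_full a ({- int n..0} \<times> Q0))
      = ZQ_full a ({- int n..0} \<times> Q0 \<union> {- int n - 1} \<times> Q0)"
    by (rule minus_step_ZQ_full[OF adm]) auto
  moreover have "{- int n..0} \<times> Q0 \<union> {- int n - 1} \<times> Q0 = {- int (Suc n)..0} \<times> Q0"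
    by auto
  ultimately show ?case
    using Suc by simp
qed

lemma Qund_eq_ZQ_full:
  assumes fin: "finite_quiver Q0 a" and adm: "admissible_ordering Q0 a vs"
  shows "Qund Q0 a vs n = ZQ_full a ({- int n..int n} \<times> Q0)"
proof (induction n)
  case 0
  then show ?case using base_quiver_eq_ZQ_full[OF fin] by simp
next
  case (Suc n)
  have "plus_step vs n (ZQ_full a ({- int n..int n} \<times> Q0))
      = ZQ_full a ({- int n..int n} \<times> Q0 \<union> {int n + 1} \<times> Q0)"
    by (rule plus_step_ZQ_full[OF adm]) auto
  moreover have "{- int n..int n} \<times> Q0 \<union> {int n + 1} \<times> Q0 = {- int n..int n + 1} \<times> Q0"
    by auto
  moreover have "minus_step vs n (ZQ_full a ({- int n..int n + 1} \<times> Q0))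
      = ZQ_full a ({- int n..int n + 1} \<times> Q0 \<union> {- int n - 1} \<times> Q0)"
    by (rule minus_step_ZQ_full[OF adm]) auto
  moreover have "{- int n..int n + 1} \<times> Q0 \<union> {- int n - 1} \<times> Q0
      = {- int (Suc n)..int (Suc n)} \<times> Q0"
    by auto
  ultimately show ?case
    using Suc by simp
qed

theorem proposition5p9:
  fixes Q0 :: "'v set" and a :: "'v \<Rightarrow> 'v \<Rightarrow> nat" and vs :: "'v list"
  assumes "finite_quiver Q0 a"
    and "acyclic_quiver a"
    and "admissible_ordering Q0 a vs"
  shows "quiver_Union (Qpos Q0 a vs) = NQ Q0 a \<and>
         quiver_Union (Qneg Q0 a vs) = negNQ Q0 a \<and>
         quiver_Union (Qund Q0 a vs) = ZQ Q0 a"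
proof -
  note fin = assms(1) and adm = assms(3)
  have "quiver_Union (Qpos Q0 a vs) = ZQ_full a (\<Union>n. {0..int n} \<times> Q0)"
    unfolding ext[OF Qpos_eq_ZQ_full[OF fin adm]]
    by (rule quiver_Union_ZQ_full) (auto intro!: monoI)
  moreover have "(\<Union>n. {0..int n} \<times> Q0) = {0..} \<times> Q0"
    by auto presburger
  moreover have "quiver_Union (Qneg Q0 a vs) = ZQ_full a (\<Union>n. {- int n..0} \<times> Q0)"
    unfolding ext[OF Qneg_eq_ZQ_full[OF fin adm]]
    by (rule quiver_Union_ZQ_full) (auto intro!: monoI)
  moreover have "(\<Union>n. {- int n..0} \<times> Q0) = {..0} \<times> Q0"
    by auto presburger
  moreover have "quiver_Union (Qund Q0 a vs) = ZQ_full a (\<Union>n. {- int n..int n} \<times> Q0)"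
    unfolding ext[OF Qund_eq_ZQ_full[OF fin adm]]
    by (rule quiver_Union_ZQ_full) (auto intro!: monoI)
  moreover have "(\<Union>n. {- int n..int n} \<times> Q0) = UNIV \<times> Q0"
    by auto presburger
  ultimately show ?thesis
    by (simp add: NQ_eq_ZQ_full[OF fin] negNQ_eq_ZQ_full[OF fin] ZQ_eq_ZQ_full[OF fin])
qed

end
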